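(* Let $G$ be a graph. Then $\mathrm{diam}(G)\le 3$ if and only if every independent set of $G$ is a general position set of $G$.
   Context: All graphs are finite, simple and connected; $\mathrm{diam}(G)$ is the maximum distance between two vertices. A set $S$ of vertices is a general position set if no three vertices of $S$ lie on a common geodesic (shortest path) of $G$. *)

theory Defs
  imports Main
begin

definition simple_graph :: "'a set \<Rightarrow> ('a \<Rightarrow> 'a \<Rightarrow> bool) \<Rightarrow> bool" where
  "simple_graph V E \<longleftrightarrow> finite V \<and> V \<noteq> {} \<and>
     (\<forall>x y. E x y \<longrightarrow> x \<in> V \<and> y \<in> V) \<and>
     (\<forall>x y. E x y \<longrightarrow> E y x) \<and> (\<forall>x. \<not> E x x)"

definition is_walk :: "'a set \<Rightarrow> ('a \<Rightarrow> 'a \<Rightarrow> bool) \<Rightarrow> 'a list \<Rightarrow> bool" where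
  "is_walk V E p \<longleftrightarrow> p \<noteq> [] \<and> set p \<subseteq> V \<and>
     (\<forall>i. Suc i < length p \<longrightarrow> E (p ! i) (p ! Suc i))"

definition graph_connected :: "'a set \<Rightarrow> ('a \<Rightarrow> 'a \<Rightarrow> bool) \<Rightarrow> bool" where
  "graph_connected V E \<longleftrightarrow>
     (\<forall>u\<in>V. \<forall>v\<in>V. \<exists>p. is_walk V E p \<and> hd p = u \<and> last p = v)"

definition gdist :: "'a set \<Rightarrow> ('a \<Rightarrow> 'a \<Rightarrow> bool) \<Rightarrow> 'a \<Rightarrow> 'a \<Rightarrow> nat" where
  "gdist V E u v = (LEAST n. \<exists>p. is_walk V E p \<and> hd p = u \<and> last p = v \<and> length p = Suc n)"

definition diam :: "'a set \<Rightarrow> ('a \<Rightarrow> 'a \<Rightarrow> bool) \<Rightarrow> nat" where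
  "diam V E = Max {gdist V E u v | u v. u \<in> V \<and> v \<in> V}"

definition is_geodesic :: "'a set \<Rightarrow> ('a \<Rightarrow> 'a \<Rightarrow> bool) \<Rightarrow> 'a list \<Rightarrow> bool" where
  "is_geodesic V E p \<longleftrightarrow> is_walk V E p \<and> length p = Suc (gdist V E (hd p) (last p))"

definition independent_set :: "'a set \<Rightarrow> ('a \<Rightarrow> 'a \<Rightarrow> bool) \<Rightarrow> 'a set \<Rightarrow> bool" where
  "independent_set V E S \<longleftrightarrow> S \<subseteq> V \<and> (\<forall>x\<in>S. \<forall>y\<in>S. \<not> E x y)"

definition general_position_set :: "'a set \<Rightarrow> ('a \<Rightarrow> 'a \<Rightarrow> bool) \<Rightarrow> 'a set \<Rightarrow> bool" where
  "general_position_set V E S \<longleftrightarrow> S \<subseteq> V \<and>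
     (\<forall>x\<in>S. \<forall>y\<in>S. \<forall>z\<in>S. x \<noteq> y \<and> y \<noteq> z \<and> x \<noteq> z \<longrightarrow>
        \<not> (\<exists>p. is_geodesic V E p \<and> {x, y, z} \<subseteq> set p))"

end

theory Submission
  imports Defs
begin

text \<open>On a geodesic no two vertices coincide and no two vertices at index distance at least two
  are adjacent, since otherwise the walk could be shortcut. If the diameter is at most 3, every
  geodesic has at most four vertices, and any three of them include two consecutive, hence adjacent,
  ones; so an independent set meets every geodesic in at most two vertices. If the diameter
  exceeds 3, a geodesic with at least five vertices exists, and its vertices number 0, 2 and 4
  form an independent set lying on a common geodesic.\<close>

lemma is_walk_append:
  assumes "is_walk V E xs" "is_walk V E ys" "E (last xs) (hd ys)"
  shows "is_walk V E (xs @ ys)"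
  unfolding is_walk_def
proof (intro conjI allI impI)
  show "xs @ ys \<noteq> []" "set (xs @ ys) \<subseteq> V" using assms(1,2) by (auto simp: is_walk_def)
  fix i assume i: "Suc i < length (xs @ ys)"
  have "xs \<noteq> []" "ys \<noteq> []" using assms by (auto simp: is_walk_def)
  consider "Suc i < length xs" | "Suc i = length xs" | "Suc i > length xs" by linarith
  then show "E ((xs @ ys) ! i) ((xs @ ys) ! Suc i)"
  proof cases
    case 1 then show ?thesis using assms(1) by (simp add: is_walk_def nth_append)
  next
    case 2
    then have "i = length xs - 1" by simp
    then show ?thesis using assms(3) \<open>xs \<noteq> []\<close> \<open>ys \<noteq> []\<close> 2
      by (simp add: nth_append last_conv_nth hd_conv_nth)
  next
    case 3
    then have "Suc (i - length xs) < length ys" "Suc i - length xs = Suc (i - length xs)"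
      using i by auto
    then show ?thesis using assms(2) 3 unfolding is_walk_def by (auto simp: nth_append)
  qed
qed

lemma is_walk_take: "is_walk V E p \<Longrightarrow> 0 < k \<Longrightarrow> is_walk V E (take k p)"
  unfolding is_walk_def by (auto dest: in_set_takeD)

lemma is_walk_drop: "is_walk V E p \<Longrightarrow> k < length p \<Longrightarrow> is_walk V E (drop k p)"
  unfolding is_walk_def by (auto dest: in_set_dropD)

lemma is_walk_shortcut:
  assumes "is_walk V E p" "i < j" "j < length p" "E (p ! i) (p ! j)"
  shows "is_walk V E (take (Suc i) p @ drop j p)"
proof (rule is_walk_append[OF is_walk_take[OF assms(1)] is_walk_drop[OF assms(1,3)]])
  have "last (take (Suc i) p) = p ! i" using assms(2,3) by (simp add: take_Suc_conv_app_nth)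
  then show "E (last (take (Suc i) p)) (hd (drop j p))"
    using assms(3,4) by (simp add: hd_drop_conv_nth)
qed simp

lemma gdist_less_length:
  assumes "is_walk V E q"
  shows "gdist V E (hd q) (last q) < length q"
proof -
  have "q \<noteq> []" using assms by (simp add: is_walk_def)
  then have "gdist V E (hd q) (last q) \<le> length q - 1"
    unfolding gdist_def by (intro Least_le) (use assms in auto)
  then show ?thesis using \<open>q \<noteq> []\<close> by (cases q) auto
qed

lemma geodesic_length_le:
  assumes "is_geodesic V E p" "is_walk V E q" "hd q = hd p" "last q = last p"
  shows "length p \<le> length q"
  using assms gdist_less_length[OF assms(2)] by (simp add: is_geodesic_def)

lemma geodesic_exists:
  assumes "graph_connected V E" "u \<in> V" "v \<in> V"
  obtains p where "is_geodesic V E p" "hd p = u" "last p = v"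
proof -
  let ?P = "\<lambda>n. \<exists>p. is_walk V E p \<and> hd p = u \<and> last p = v \<and> length p = Suc n"
  obtain q where "is_walk V E q" "hd q = u" "last q = v"
    using assms unfolding graph_connected_def by blast
  then have "?P (length q - 1)" by (intro exI[of _ q]) (auto simp: is_walk_def)
  then have "?P (gdist V E u v)" unfolding gdist_def by (rule LeastI)
  then show ?thesis using that by (auto simp: is_geodesic_def)
qed

lemma geodesic_nonadjacent:
  assumes "is_geodesic V E p" "Suc i < j" "j < length p"
  shows "\<not> E (p ! i) (p ! j)"
proof
  let ?q = "take (Suc i) p @ drop j p"
  assume "E (p ! i) (p ! j)"
  then have "is_walk V E ?q"
    using assms by (intro is_walk_shortcut) (auto simp: is_geodesic_def)
  moreover have "hd ?q = hd p" "last ?q = last p" using assms(2,3) by (cases p; simp)+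
  ultimately have "length p \<le> length ?q" using assms(1) by (intro geodesic_length_le)
  then show False using assms(2,3) by simp
qed

lemma geodesic_distinct:
  assumes "is_geodesic V E p"
  shows "distinct p"
proof -
  have walk: "is_walk V E p" using assms by (simp add: is_geodesic_def)
  have "p ! i \<noteq> p ! j" if "i < j" "j < length p" for i j
  proof
    let ?q = "take i p @ drop j p"
    assume same: "p ! i = p ! j"
    have "is_walk V E ?q \<and> hd ?q = hd p"
    proof (cases i)
      case 0
      then show ?thesis using is_walk_drop[OF walk that(2)] that same
        by (cases p) (auto simp: hd_drop_conv_nth)
    next
      case (Suc i')
      then have "E (p ! i') (p ! j)"
        using walk that same unfolding is_walk_def by (metis Suc_lessD less_trans_Suc)
      then have "is_walk V E ?q"
        using walk that Suc by (intro is_walk_shortcut[of V E p i' j, simplified Suc[symmetric]]) simp_all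
      moreover have "hd ?q = hd p" using that Suc by (cases p) auto
      ultimately show ?thesis by blast
    qed
    moreover have "last ?q = last p" using that by simp
    ultimately have "length p \<le> length ?q" using assms by (intro geodesic_length_le) auto
    then show False using that by simp
  qed
  then show ?thesis unfolding distinct_conv_nth by (metis linorder_neqE_nat)
qed

lemma diam_le_iff:
  assumes "finite V" "V \<noteq> {}"
  shows "diam V E \<le> k \<longleftrightarrow> (\<forall>u\<in>V. \<forall>v\<in>V. gdist V E u v \<le> k)"
proof -
  have "finite {gdist V E u v | u v. u \<in> V \<and> v \<in> V}"
    using assms(1) by (intro finite_image_set2) auto
  moreover have "{gdist V E u v | u v. u \<in> V \<and> v \<in> V} \<noteq> {}" using assms(2) by blast
  ultimately show ?thesis unfolding diam_def by (subst Max_le_iff) blast+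
qed

lemma three_of_four_indices_consecutive:
  fixes i j k :: nat
  assumes "i < 4" "j < 4" "k < 4" "distinct [i, j, k]"
  shows "\<exists>a\<in>{i, j, k}. Suc a \<in> {i, j, k}"
  using assms by auto

lemma independent_set_meets_short_walk:
  assumes "independent_set V E S" "is_walk V E p" "length p \<le> 4"
    and "{x, y, z} \<subseteq> S \<inter> set p"
  shows "\<not> distinct [x, y, z]"
proof
  assume xyz: "distinct [x, y, z]"
  obtain i j k where ijk: "i < length p" "j < length p" "k < length p"
    and "p ! i = x" "p ! j = y" "p ! k = z"
    using assms(4) by (auto simp: in_set_conv_nth)
  then have "distinct [i, j, k]" using xyz by auto
  then obtain a where a: "a \<in> {i, j, k}" "Suc a \<in> {i, j, k}"
    using three_of_four_indices_consecutive ijk assms(3) by (metis order_less_le_trans)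
  then have "E (p ! a) (p ! Suc a)" using assms(2) ijk unfolding is_walk_def by auto
  moreover have "p ! a \<in> S" "p ! Suc a \<in> S" using a assms(4) \<open>p ! i = x\<close> \<open>p ! j = y\<close> \<open>p ! k = z\<close>
    by auto
  ultimately show False using assms(1) by (auto simp: independent_set_def)
qed

lemma independent_set_general_position_if_diam_le_3:
  assumes "finite V" "V \<noteq> {}" "diam V E \<le> 3" "independent_set V E S"
  shows "general_position_set V E S"
  unfolding general_position_set_def
proof (intro conjI ballI impI notI)
  show "S \<subseteq> V" using assms(4) by (simp add: independent_set_def)
  fix x y z assume xyz: "x \<in> S" "y \<in> S" "z \<in> S" "x \<noteq> y \<and> y \<noteq> z \<and> x \<noteq> z"
  assume "\<exists>p. is_geodesic V E p \<and> {x, y, z} \<subseteq> set p"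
  then obtain p where geo: "is_geodesic V E p" and "{x, y, z} \<subseteq> set p" by blast
  have walk: "is_walk V E p" using geo by (simp add: is_geodesic_def)
  then have "hd p \<in> V" "last p \<in> V" by (auto simp: is_walk_def)
  then have "gdist V E (hd p) (last p) \<le> 3" using assms(1-3) diam_le_iff by blast
  then have "length p \<le> 4" using geo by (simp add: is_geodesic_def)
  from independent_set_meets_short_walk[OF assms(4) walk this, of x y z]
  show False using xyz \<open>{x, y, z} \<subseteq> set p\<close> by auto
qed

lemma long_geodesic_obstructs_general_position:
  assumes "simple_graph V E" "is_geodesic V E p" "5 \<le> length p"
  obtains S where "independent_set V E S" "\<not> general_position_set V E S"
proof
  let ?S = "{p ! 0, p ! 2, p ! 4}"
  have len: "0 < length p" "2 < length p" "4 < length p" using assms(3) by linarith+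
  then have on_p: "?S \<subseteq> set p" by simp
  have "set p \<subseteq> V" using assms(2) by (simp add: is_geodesic_def is_walk_def)
  moreover have "\<not> E (p ! 0) (p ! 2)" "\<not> E (p ! 2) (p ! 4)" "\<not> E (p ! 0) (p ! 4)"
    using geodesic_nonadjacent[OF assms(2)] len by simp_all
  moreover have "\<forall>x y. E x y \<longrightarrow> E y x" "\<forall>x. \<not> E x x"
    using assms(1) by (simp_all add: simple_graph_def)
  ultimately show "independent_set V E ?S"
    using on_p unfolding independent_set_def by auto
  have "p ! 0 \<noteq> p ! 2" "p ! 2 \<noteq> p ! 4" "p ! 0 \<noteq> p ! 4"
    using nth_eq_iff_index_eq[OF geodesic_distinct[OF assms(2)]] len by simp_all
  then show "\<not> general_position_set V E ?S"
    using on_p assms(2) unfolding general_position_set_def by (metis insertCI)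
qed

theorem corollary4p3:
  fixes V :: "'a set" and E :: "'a \<Rightarrow> 'a \<Rightarrow> bool"
  assumes "simple_graph V E" and "graph_connected V E"
  shows "diam V E \<le> 3 \<longleftrightarrow>
           (\<forall>S. independent_set V E S \<longrightarrow> general_position_set V E S)"
proof
  have fin: "finite V" "V \<noteq> {}" using assms(1) by (auto simp: simple_graph_def)
  show "diam V E \<le> 3 \<Longrightarrow> \<forall>S. independent_set V E S \<longrightarrow> general_position_set V E S"
    using independent_set_general_position_if_diam_le_3[OF fin] by blast
  assume all_gp: "\<forall>S. independent_set V E S \<longrightarrow> general_position_set V E S"
  show "diam V E \<le> 3"
  proof (rule ccontr)
    assume "\<not> diam V E \<le> 3"
    then obtain u v where "u \<in> V" "v \<in> V" "\<not> gdist V E u v \<le> 3"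
      using diam_le_iff[OF fin] by blast
    moreover obtain p where "is_geodesic V E p" "hd p = u" "last p = v"
      using geodesic_exists[OF assms(2) \<open>u \<in> V\<close> \<open>v \<in> V\<close>] .
    ultimately have "5 \<le> length p" by (simp add: is_geodesic_def)
    then show False
      using long_geodesic_obstructs_general_position[OF assms(1) \<open>is_geodesic V E p\<close>] all_gp
      by blast
  qed
qed

end
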